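(* In the setting of the generalized combinatorial topology with $\Lambda$ caches and arbitrary vector $(K_0,\dots,K_\Lambda)$ of non-negative integers (with $N\ge K=\sum_\lambda K_\lambda\binom{\Lambda}{\lambda}$), for every $t\in\{0,1,\dots,\Lambda\}$ the $\Lambda$-cache MAN placement with parameter $t$ (which uses cache size $M=tN/\Lambda$ and does not depend on $(K_0,\dots,K_\Lambda)$) admits a delivery scheme whose worst-case load equals $\sum_{\lambda=0}^{\Lambda-t}K_\lambda\binom{\Lambda}{t+\lambda}/\binom{\Lambda}{t}$, which is the optimal worst-case load under uncoded placement $R^\star_{\text{comb}}(tN/\Lambda)$. That is, a single fixed MAN placement is optimal (under uncoded placement) simultaneously for every instance of the generalized combinatorial topology.
   Context: Multi-access coded caching model: a server holds $N$ files $W_1,\dots,W_N$ of $B$ bits; $\Lambda$ caches of $MB$ bits each; $K$ users, $N\ge K$; user $u$ is connected to a subset $\mathcal U_u\subseteq[\Lambda]$ of caches and reads their full contents. Uncoded placement: each file is partitioned into subfiles $W_{n,\mathcal T}$, $\mathcal T\subseteq[\Lambda]$, and cache $\ell$ stores exactly those $W_{n,\mathcal T}$ with $\ell\in\mathcal T$. In delivery each user requests a file, the server broadcasts an error-free message $X$, and each user must decode its file from $X$ and its connected caches; the worst-case load is $\max_{\text{demands}}|X|/B$, and $R^\star$ denotes the infimum over schemes with uncoded placement. Generalized combinatorial topology with vector $(K_0,\dots,K_\Lambda)$: for every $\mathcal U\subseteq[\Lambda]$ there are exactly $K_{|\mathcal U|}$ users whose set of connected caches is exactly $\mathcal U$;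 its optimal load is $R^\star_{\text{comb}}$. MAN placement with parameter $t$: each file $W_n$ is split into $\binom{\Lambda}{t}$ equal-size disjoint subfiles $W_{n,\mathcal T}$, $\mathcal T\subseteq[\Lambda]$, $|\mathcal T|=t$, and cache $\ell$ stores $\{W_{n,\mathcal T}: n\in[N],\ |\mathcal T|=t,\ \ell\in\mathcal T\}$ (exactly $tNB/\Lambda$ bits). Convention: $\binom{n}{k}=0$ if $n<k$ or $k<0$. *)

theory Defs
  imports Complex_Main "HOL-Library.FuncSet"
begin

(* Files are W :: nat => nat => bool ; W n i is bit i of file n (n < N, i < B).
   An uncoded placement assigns to every bit (n,i) the set pl n i of caches storing it
   (this is the subfile index T: bit (n,i) belongs to W_{n,T} with T = pl n i). *)

definition uncoded_placement :: "nat \<Rightarrow> nat \<Rightarrow> nat \<Rightarrow> (nat \<Rightarrow> nat \<Rightarrow> nat set) \<Rightarrow> bool" where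
  "uncoded_placement Lam N B pl \<longleftrightarrow> (\<forall>n<N. \<forall>i<B. pl n i \<subseteq> {..<Lam})"

definition cache_content :: "nat \<Rightarrow> nat \<Rightarrow> (nat \<Rightarrow> nat \<Rightarrow> nat set) \<Rightarrow> nat \<Rightarrow> (nat \<times> nat) set" where
  "cache_content N B pl l = {(n, i). n < N \<and> i < B \<and> l \<in> pl n i}"

definition respects_cache_size :: "nat \<Rightarrow> nat \<Rightarrow> nat \<Rightarrow> real \<Rightarrow> (nat \<Rightarrow> nat \<Rightarrow> nat set) \<Rightarrow> bool" where
  "respects_cache_size Lam N B M pl \<longleftrightarrow>
     (\<forall>l<Lam. real (card (cache_content N B pl l)) \<le> M * real B)"

definition known_bits :: "nat \<Rightarrow> nat \<Rightarrow> (nat \<Rightarrow> nat \<Rightarrow> nat set) \<Rightarrow> nat set \<Rightarrow>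
    (nat \<Rightarrow> nat \<Rightarrow> bool) \<Rightarrow> (nat \<Rightarrow> nat \<Rightarrow> bool)" where
  "known_bits N B pl U W = (\<lambda>n i. if n < N \<and> i < B \<and> pl n i \<inter> U \<noteq> {} then W n i else False)"

definition demands :: "'u set \<Rightarrow> nat \<Rightarrow> ('u \<Rightarrow> nat) set" where
  "demands users N = users \<rightarrow>\<^sub>E {..<N}"

definition delivers :: "'u set \<Rightarrow> ('u \<Rightarrow> nat set) \<Rightarrow> nat \<Rightarrow> nat \<Rightarrow>
    (nat \<Rightarrow> nat \<Rightarrow> nat set) \<Rightarrow> ('u \<Rightarrow> nat) \<Rightarrow> nat \<Rightarrow> bool" where
  "delivers users conn N B pl d L \<longleftrightarrow>
     (\<exists>enc :: (nat \<Rightarrow> nat \<Rightarrow> bool) \<Rightarrow> bool list.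
        (\<forall>W. length (enc W) = L) \<and>
        (\<forall>u\<in>users. \<exists>dec :: bool list \<Rightarrow> (nat \<Rightarrow> nat \<Rightarrow> bool) \<Rightarrow> nat \<Rightarrow> bool.
           \<forall>W. \<forall>i<B. dec (enc W) (known_bits N B pl (conn u) W) i = W (d u) i))"

definition achieves_load :: "'u set \<Rightarrow> ('u \<Rightarrow> nat set) \<Rightarrow> nat \<Rightarrow> nat \<Rightarrow>
    (nat \<Rightarrow> nat \<Rightarrow> nat set) \<Rightarrow> real \<Rightarrow> bool" where
  "achieves_load users conn N B pl R \<longleftrightarrow>
     (\<exists>Lf :: ('u \<Rightarrow> nat) \<Rightarrow> nat.
        (\<forall>d\<in>demands users N. delivers users conn N B pl d (Lf d)) \<and>
        Max ((\<lambda>d. real (Lf d) / real B) ` demands users N) = R)"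

definition opt_load :: "nat \<Rightarrow> 'u set \<Rightarrow> ('u \<Rightarrow> nat set) \<Rightarrow> nat \<Rightarrow> real \<Rightarrow> real" where
  "opt_load Lam users conn N M =
     Inf {R. \<exists>B pl. B > 0 \<and> uncoded_placement Lam N B pl \<and>
                   respects_cache_size Lam N B M pl \<and> achieves_load users conn N B pl R}"

definition comb_users :: "nat \<Rightarrow> (nat \<Rightarrow> nat) \<Rightarrow> (nat set \<times> nat) set" where
  "comb_users Lam Kv = {(U, j). U \<subseteq> {..<Lam} \<and> j < Kv (card U)}"

definition comb_conn :: "nat set \<times> nat \<Rightarrow> nat set" where
  "comb_conn u = fst u"

text \<open>MAN placement with parameter t: every file is split into binom(Lam,t) equal-size
  subfiles W_{n,T}, |T| = t, and bits of W_{n,T} are stored exactly in the caches of T.\<close>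
definition MAN_placement :: "nat \<Rightarrow> nat \<Rightarrow> nat \<Rightarrow> nat \<Rightarrow> (nat \<Rightarrow> nat \<Rightarrow> nat set) \<Rightarrow> bool" where
  "MAN_placement Lam N B t pl \<longleftrightarrow>
     (Lam choose t) dvd B \<and>
     (\<forall>n<N. \<forall>i<B. pl n i \<subseteq> {..<Lam} \<and> card (pl n i) = t) \<and>
     (\<forall>n<N. \<forall>T. T \<subseteq> {..<Lam} \<and> card T = t \<longrightarrow>
         card {i. i < B \<and> pl n i = T} = B div (Lam choose t))"

end

(*
  Achievability: with the MAN placement, for every set S of at least t caches and every user
  class attached to a set U of |S| - t caches inside S, the server sends the XOR, over these
  classes, of the subfiles W_{d(U), S - U}. A user of class U is connected to a cache storing
  every summand but its own, so it recovers its missing subfiles, and counting the transmissions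
  gives the load.

  Optimality: fix an ordering of the caches and enlarge the cache set of each user to the
  shortest prefix of the ordering containing it. These enlarged sets form a chain, so a genie
  argument bounds the load of any demand with distinct requests by the number of requested bits
  missing from them. Averaging over all orderings and over the cyclic shifts of such a demand
  turns this bound into the average, over all bits, of the function
  s \<mapsto> \<Sum>_l K_l binom(Lam, s + l) / binom(Lam, s) at the number s of caches storing the bit.
  This function is convex and non-increasing, and the cache size forces the average of s to be at
  most t, so by Jensen's inequality the load is at least its value at t, the MAN load.
*)

theory Submission
  imports Defs "HOL-Combinatorics.Multiset_Permutations"
begin

section \<open>Orderings of the caches\<close>

definition binom_ratio :: "nat \<Rightarrow> nat \<Rightarrow> nat \<Rightarrow> real" where
  "binom_ratio L l s = real (L choose (s + l)) / real (L choose s)"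

lemma binom_ratio_pascal:
  assumes "s \<le> Suc n"
  shows "real (Suc n - s) * (fact n * (binom_ratio n k s + binom_ratio n (Suc k) s))
       = fact (Suc n) * binom_ratio (Suc n) (Suc k) s"
proof (cases "s = Suc n")
  case True
  then show ?thesis by (simp add: binom_ratio_def binomial_eq_0)
next
  case False
  define c where "c = real (n choose s)"
  define c' where "c' = real (Suc n choose s)"
  have "c > 0" "c' > 0" using assms False by (simp_all add: c_def c'_def)
  have absorb: "real (Suc n - s) * c' = real (Suc n) * c"
    unfolding c_def c'_def using binomial_absorb_comp[of "Suc n" s] by (metis diff_Suc_1 of_nat_mult)
  have "binom_ratio n k s + binom_ratio n (Suc k) s = real (Suc n choose (s + Suc k)) / c"
    by (simp add: binom_ratio_def c_def add_divide_distrib)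
  then have "real (Suc n - s) * (fact n * (binom_ratio n k s + binom_ratio n (Suc k) s))
      = fact n * real (Suc n choose (s + Suc k)) * (real (Suc n - s) / c)"
    by simp
  also have "real (Suc n - s) / c = real (Suc n) / c'"
    using \<open>c > 0\<close> \<open>c' > 0\<close> absorb by (simp add: frac_eq_eq)
  finally show ?thesis by (simp add: binom_ratio_def c'_def)
qed

definition avoiding_prefix_length :: "'a set \<Rightarrow> 'a list \<Rightarrow> nat" where
  "avoiding_prefix_length T xs = length (takeWhile (\<lambda>x. x \<notin> T) xs)"

lemma avoiding_prefix_length_Cons:
  "avoiding_prefix_length T (x # xs) = (if x \<in> T then 0 else Suc (avoiding_prefix_length T xs))"
  by (simp add: avoiding_prefix_length_def)

lemma avoiding_prefix_length_empty [simp]: "avoiding_prefix_length {} xs = length xs"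
  by (induction xs) (simp_all add: avoiding_prefix_length_def)

lemma sum_permutations_of_set_Cons:
  assumes "finite A" "A \<noteq> {}"
  shows "(\<Sum>xs\<in>permutations_of_set A. f xs) = (\<Sum>x\<in>A. \<Sum>xs\<in>permutations_of_set (A - {x}). f (x # xs))"
proof -
  have "(\<Sum>xs\<in>permutations_of_set A. f xs)
      = (\<Sum>x\<in>A. \<Sum>xs\<in>(\<lambda>xs. x # xs) ` permutations_of_set (A - {x}). f xs)"
    unfolding permutations_of_set_nonempty[OF assms(2)] by (rule sum.UNION_disjoint) (use assms in auto)
  also have "\<dots> = (\<Sum>x\<in>A. \<Sum>xs\<in>permutations_of_set (A - {x}). f (x # xs))"
    by (rule sum.cong) (auto simp: sum.reindex inj_on_def)
  finally show ?thesis .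
qed

text \<open>The left-hand side counts the pairs of an ordering of \<open>A\<close> and a \<open>k\<close>-set of elements
  of \<open>A\<close> that all precede every element of \<open>T\<close>.\<close>
lemma sum_permutations_avoiding_prefix_choose:
  assumes "finite A" "T \<subseteq> A"
  shows "(\<Sum>xs\<in>permutations_of_set A. real (avoiding_prefix_length T xs choose k))
       = fact (card A) * binom_ratio (card A) k (card T)"
  using assms
proof (induction "card A" arbitrary: A k)
  case 0
  then show ?case by (simp add: binom_ratio_def)
next
  case (Suc n)
  have cardT: "card T \<le> card A" using Suc.prems by (simp add: card_mono)
  consider "T = {}" | "k = 0" | k' where "T \<noteq> {}" "k = Suc k'" by (cases k) auto
  then show ?case
  proof cases
    case 1
    then show ?thesis
      using Suc.prems by (simp add: length_finite_permutations_of_set binom_ratio_def)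
  next
    case 2
    then show ?thesis using cardT Suc.prems by (simp add: binom_ratio_def)
  next
    case 3
    define P where "P j x = (\<Sum>xs\<in>permutations_of_set (A - {x}).
                               real (avoiding_prefix_length T xs choose j))" for j x
    have IH: "P j x = fact n * binom_ratio n j (card T)" if "x \<in> A - T" for x j
    proof -
      have "card (A - {x}) = n" "T \<subseteq> A - {x}" using Suc.hyps(2) Suc.prems that by auto
      then show ?thesis unfolding P_def using Suc.hyps(1)[of "A - {x}" j] Suc.prems(1) by simp
    qed
    have "(\<Sum>xs\<in>permutations_of_set A. real (avoiding_prefix_length T xs choose k))
        = (\<Sum>x\<in>A. \<Sum>xs\<in>permutations_of_set (A - {x}). real (avoiding_prefix_length T (x # xs) choose k))"
      using Suc by (intro sum_permutations_of_set_Cons) auto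
    also have "\<dots> = (\<Sum>x\<in>A - T. P k' x + P k x)"
      by (rule sum.mono_neutral_cong_right)
        (use Suc.prems in \<open>auto simp: P_def avoiding_prefix_length_Cons \<open>k = Suc k'\<close> sum.distrib\<close>)
    also have "\<dots> = (\<Sum>x\<in>A - T. fact n * (binom_ratio n k' (card T) + binom_ratio n k (card T)))"
      by (rule sum.cong) (simp_all add: IH distrib_left)
    also have "\<dots> = fact (Suc n) * binom_ratio (Suc n) k (card T)"
    proof -
      have "card (A - T) = Suc n - card T"
        using Suc.hyps(2) Suc.prems by (simp add: card_Diff_subset finite_subset)
      then show ?thesis
        using binom_ratio_pascal[of "card T" n k'] cardT Suc.hyps(2) \<open>k = Suc k'\<close> by (simp add: mult.assoc)
    qed
    finally show ?thesis using Suc.hyps(2) by simp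
  qed
qed

definition covering_prefix :: "'a list \<Rightarrow> 'a set \<Rightarrow> 'a set" where
  "covering_prefix xs U = set (take (LEAST r. U \<subseteq> set (take r xs)) xs)"

lemma subset_covering_prefix: "U \<subseteq> set xs \<Longrightarrow> U \<subseteq> covering_prefix xs U"
  unfolding covering_prefix_def by (rule LeastI[of _ "length xs"]) simp

lemma covering_prefix_linear:
  "covering_prefix xs U \<subseteq> covering_prefix xs U' \<or> covering_prefix xs U' \<subseteq> covering_prefix xs U"
  unfolding covering_prefix_def by (metis nle_le set_take_subset_set_take)

lemma finite_covering_prefix [simp]: "finite (covering_prefix xs U)"
  by (simp add: covering_prefix_def)

lemma disjoint_covering_prefix_iff:
  assumes "U \<subseteq> set xs"
  shows "T \<inter> covering_prefix xs U = {} \<longleftrightarrow> U \<subseteq> set (takeWhile (\<lambda>x. x \<notin> T) xs)"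
proof
  assume disj: "T \<inter> covering_prefix xs U = {}"
  define r where "r = (LEAST r. U \<subseteq> set (take r xs))"
  have "takeWhile (\<lambda>x. x \<notin> T) (take r xs @ drop r xs) = take r xs @ takeWhile (\<lambda>x. x \<notin> T) (drop r xs)"
    using disj by (intro takeWhile_append2) (auto simp: covering_prefix_def r_def)
  then have "covering_prefix xs U \<subseteq> set (takeWhile (\<lambda>x. x \<notin> T) xs)"
    by (simp add: covering_prefix_def r_def)
  then show "U \<subseteq> set (takeWhile (\<lambda>x. x \<notin> T) xs)"
    using subset_covering_prefix[OF assms] by blast
next
  assume U: "U \<subseteq> set (takeWhile (\<lambda>x. x \<notin> T) xs)"
  define p where "p = length (takeWhile (\<lambda>x. x \<notin> T) xs)"
  have tw: "takeWhile (\<lambda>x. x \<notin> T) xs = take p xs"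
    unfolding p_def by (rule takeWhile_eq_take)
  have "(LEAST r. U \<subseteq> set (take r xs)) \<le> p"
    by (rule Least_le) (use U tw in auto)
  then have "covering_prefix xs U \<subseteq> set (take p xs)"
    unfolding covering_prefix_def by (rule set_take_subset_set_take)
  moreover have "T \<inter> set (take p xs) = {}"
    using tw[symmetric] by (auto dest: set_takeWhileD)
  ultimately show "T \<inter> covering_prefix xs U = {}" by blast
qed

lemma sum_Pow_card:
  assumes "finite A"
  shows "(\<Sum>U\<in>Pow A. f (card U)) = (\<Sum>k\<le>card A. of_nat (card A choose k) * f k)"
proof -
  have "(\<Sum>U\<in>Pow A. f (card U)) = (\<Sum>k\<le>card A. \<Sum>U\<in>{U\<in>Pow A. card U = k}. f (card U))"
    by (rule sum.group[symmetric]) (use assms in \<open>auto intro: card_mono\<close>)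
  also have "\<dots> = (\<Sum>k\<le>card A. of_nat (card A choose k) * f k)"
  proof (rule sum.cong[OF refl])
    fix k
    have "{U\<in>Pow A. card U = k} = {U. U \<subseteq> A \<and> card U = k}" by auto
    then show "(\<Sum>U\<in>{U\<in>Pow A. card U = k}. f (card U)) = of_nat (card A choose k) * f k"
      using n_subsets[OF assms, of k] by simp
  qed
  finally show ?thesis .
qed

lemma comb_users_Sigma: "comb_users Lam Kv = Sigma (Pow {..<Lam}) (\<lambda>U. {..<Kv (card U)})"
  unfolding comb_users_def by auto

lemma finite_comb_users [simp]: "finite (comb_users Lam Kv)"
  unfolding comb_users_Sigma by auto

lemma card_comb_users: "card (comb_users Lam Kv) = (\<Sum>l\<le>Lam. Kv l * (Lam choose l))"
  unfolding comb_users_Sigma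
  by (subst card_SigmaI) (auto simp: sum_Pow_card[of "{..<Lam}" Kv] mult.commute)

text \<open>The users whose covering prefix misses \<open>T\<close> are those connected only to caches that
  precede \<open>T\<close> in the ordering.\<close>
lemma card_comb_users_avoiding:
  assumes xs: "xs \<in> permutations_of_set {..<Lam}"
  shows "card {u \<in> comb_users Lam Kv. T \<inter> covering_prefix xs (fst u) = {}}
       = (\<Sum>k\<le>Lam. Kv k * (avoiding_prefix_length T xs choose k))"
proof -
  have set_xs: "set xs = {..<Lam}" and "distinct xs"
    using xs by (auto simp: permutations_of_set_def)
  define P where "P = set (takeWhile (\<lambda>x. x \<notin> T) xs)"
  have P: "P \<subseteq> {..<Lam}" unfolding P_def using set_xs by (auto dest: set_takeWhileD)
  have card_P: "card P = avoiding_prefix_length T xs"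
    unfolding P_def avoiding_prefix_length_def
    by (metis \<open>distinct xs\<close> distinct_card distinct_takeWhile)
  have "{u \<in> comb_users Lam Kv. T \<inter> covering_prefix xs (fst u) = {}} = Sigma (Pow P) (\<lambda>U. {..<Kv (card U)})"
  proof -
    have "T \<inter> covering_prefix xs U = {} \<longleftrightarrow> U \<subseteq> P" if "U \<subseteq> {..<Lam}" for U
      unfolding P_def using that set_xs by (intro disjoint_covering_prefix_iff) auto
    with P have "(U, j) \<in> {u \<in> comb_users Lam Kv. T \<inter> covering_prefix xs (fst u) = {}}
        \<longleftrightarrow> (U, j) \<in> Sigma (Pow P) (\<lambda>U. {..<Kv (card U)})" for U j
      unfolding comb_users_def by auto
    then show ?thesis by (simp add: set_eq_iff)
  qed
  then have "card {u \<in> comb_users Lam Kv. T \<inter> covering_prefix xs (fst u) = {}} = (\<Sum>U\<in>Pow P. Kv (card U))"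
    using P by (simp add: finite_subset)
  also have "\<dots> = (\<Sum>k\<le>card P. (card P choose k) * Kv k)"
    using P by (simp add: sum_Pow_card finite_subset)
  also have "\<dots> = (\<Sum>k\<le>Lam. (card P choose k) * Kv k)"
    using card_mono[OF finite_lessThan P] by (intro sum.mono_neutral_left) auto
  finally show ?thesis by (simp add: card_P mult.commute)
qed

section \<open>Convexity of the MAN load\<close>

lemma binom_ratio_nonneg: "binom_ratio L l s \<ge> 0"
  by (simp add: binom_ratio_def)

lemma binom_ratio_Suc:
  assumes "k < L"
  shows "binom_ratio L l (Suc k) * (real (k + l + 1) * real (L - k))
       = binom_ratio L l k * (real (L - (k + l)) * real (k + 1))"
proof -
  have step: "real (Suc j) * real (n choose Suc j) = real (n - j) * real (n choose j)" for n j
    using binomial_absorption[of j n] binomial_absorb_comp[of n j] by (metis of_nat_mult)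
  define a where "a = real (L choose k)"
  define a1 where "a1 = real (L choose Suc k)"
  define b where "b = real (L choose (k + l))"
  define b1 where "b1 = real (L choose (Suc k + l))"
  have "a > 0" "a1 > 0" unfolding a_def a1_def using assms by simp_all
  have ea: "real (k + 1) * a1 = real (L - k) * a" unfolding a_def a1_def using step[of k L] by simp
  have eb: "real (k + l + 1) * b1 = real (L - (k + l)) * b" unfolding b_def b1_def using step[of "k + l" L] by simp
  have "binom_ratio L l (Suc k) * (real (k + l + 1) * real (L - k)) = real (k + l + 1) * b1 * real (L - k) / a1"
    unfolding binom_ratio_def b1_def a1_def by simp
  also have "\<dots> = real (L - (k + l)) * b * (real (L - k) * a) / (a1 * a)"
    using eb \<open>a > 0\<close> by simp
  also have "\<dots> = real (L - (k + l)) * b * (real (k + 1) * a1) / (a1 * a)"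
    using ea by simp
  also have "\<dots> = binom_ratio L l k * (real (L - (k + l)) * real (k + 1))"
    unfolding binom_ratio_def a_def b_def using \<open>a > 0\<close> \<open>a1 > 0\<close> by (simp add: a_def field_simps)
  finally show ?thesis .
qed

lemma binom_ratio_Suc_le:
  assumes "k < L"
  shows "binom_ratio L l (Suc k) \<le> binom_ratio L l k"
proof -
  define D where "D = real (k + l + 1) * real (L - k)"
  define A where "A = real (L - (k + l)) * real (k + 1)"
  have "A \<le> real (L - k) * real (k + l + 1)"
    unfolding A_def by (intro mult_mono) auto
  then have "A \<le> D" by (simp add: D_def mult.commute)
  moreover have "D > 0" unfolding D_def using assms by simp
  moreover have "binom_ratio L l (Suc k) * D = binom_ratio L l k * A"
    unfolding D_def A_def by (rule binom_ratio_Suc[OF assms])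
  ultimately show ?thesis
    using binom_ratio_nonneg[of L l k]
    by (metis mult_le_cancel_right_pos mult_left_mono)
qed

lemma binom_ratio_antimono:
  assumes "s \<le> s'" "s' \<le> L"
  shows "binom_ratio L l s' \<le> binom_ratio L l s"
  using assms
proof (induction s' rule: dec_induct)
  case (step s')
  then show ?case using binom_ratio_Suc_le[of s' L l] by simp
qed simp

lemma binom_ratio_convexity_polynomial:
  fixes x y z :: real
  assumes "x \<ge> 0" "y = 0 \<or> y \<ge> 1" "y + 1 \<le> z"
  shows "((x+y+1)*z) * ((x+y+2)*(z-1)) + ((z-y)*(x+1)) * ((z-y-1)*(x+2))
         - 2*((z-y)*(x+1)) * ((x+y+2)*(z-1)) \<ge> 0"
proof -
  have "((x+y+1)*z) * ((x+y+2)*(z-1)) + ((z-y)*(x+1)) * ((z-y-1)*(x+2))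
         - 2*((z-y)*(x+1)) * ((x+y+2)*(z-1))
      = y * (x + z + 1) * ((y+1)*(z-1) + (y-1)*(x+1))"
    by (simp add: algebra_simps)
  moreover have "y * (x + z + 1) * ((y+1)*(z-1) + (y-1)*(x+1)) \<ge> 0"
    using assms by (cases "y = 0") (auto intro!: mult_nonneg_nonneg add_nonneg_nonneg)
  ultimately show ?thesis by simp
qed

lemma binom_ratio_convex:
  assumes "k + 2 \<le> L"
  shows "2 * binom_ratio L l (k + 1) \<le> binom_ratio L l k + binom_ratio L l (k + 2)"
proof -
  define h0 where "h0 = binom_ratio L l k"
  define h1 where "h1 = binom_ratio L l (k + 1)"
  define h2 where "h2 = binom_ratio L l (k + 2)"
  define D0 where "D0 = real (k + l + 1) * real (L - k)"
  define A0 where "A0 = real (L - (k + l)) * real (k + 1)"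
  define D1 where "D1 = real (k + l + 2) * real (L - Suc k)"
  define A1 where "A1 = real (L - (Suc k + l)) * real (k + 2)"
  have e0: "h1 * D0 = h0 * A0"
    unfolding h0_def h1_def D0_def A0_def using binom_ratio_Suc[of k L l] assms by simp
  have e1: "h2 * D1 = h1 * A1"
    unfolding h1_def h2_def D1_def A1_def using binom_ratio_Suc[of "Suc k" L l] assms
    by (simp add: add_ac)
  have "D0 > 0" "D1 > 0" "D0 * D1 > 0" unfolding D0_def D1_def using assms by simp_all
  have E: "D0 * D1 + A0 * A1 - 2 * A0 * D1 \<ge> 0"
  proof (cases "k + l < L")
    case True
    define z where "z = real (L - k)"
    have "D0 = (real k + real l + 1) * z" "D1 = (real k + real l + 2) * (z - 1)"
      "A0 = (z - real l) * (real k + 1)" "A1 = (z - real l - 1) * (real k + 2)"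
      using True assms by (simp_all add: D0_def D1_def A0_def A1_def z_def algebra_simps)
    moreover have "real l = 0 \<or> real l \<ge> 1" by (cases l) auto
    ultimately show ?thesis
      using binom_ratio_convexity_polynomial[of "real k" "real l" z] True by (simp add: z_def)
  next
    case False
    then show ?thesis using \<open>D0 > 0\<close> \<open>D1 > 0\<close> by (simp add: A0_def)
  qed
  have "(h0 + h2 - 2 * h1) * (D0 * D1) = h0 * (D0 * D1 + A0 * A1 - 2 * A0 * D1)"
    using e0 e1 by (simp add: algebra_simps)
  also have "\<dots> \<ge> 0" using E by (simp add: h0_def binom_ratio_nonneg)
  finally have "0 \<le> (h0 + h2 - 2 * h1) * (D0 * D1)" .
  then have "0 \<le> h0 + h2 - 2 * h1"
    using \<open>D0 * D1 > 0\<close> by (metis not_le zero_le_mult_iff)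
  then show ?thesis by (simp add: h0_def h1_def h2_def)
qed

lemma convex_sequence_support_line:
  fixes f :: "nat \<Rightarrow> real"
  assumes conv: "\<And>k. k + 2 \<le> L \<Longrightarrow> 2 * f (k + 1) \<le> f k + f (k + 2)"
    and "t < L" "s \<le> L"
  shows "f t + (f (t + 1) - f t) * (real s - real t) \<le> f s"
proof -
  define \<Delta> where "\<Delta> k = f (k + 1) - f k" for k
  have mono: "\<Delta> i \<le> \<Delta> j" if "i \<le> j" "j < L" for i j
    using that
  proof (induction j rule: dec_induct)
    case (step j)
    then show ?case using conv[of j] by (simp add: \<Delta>_def)
  qed simp
  show ?thesis
  proof (cases "t \<le> s")
    case True
    have "f t + real j * \<Delta> t \<le> f (t + j)" if "t + j \<le> L" for j
      using that
    proof (induction j)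
      case (Suc j)
      then show ?case
        using mono[of t "t + j"] by (simp add: \<Delta>_def algebra_simps)
    qed simp
    from this[of "s - t"] True \<open>s \<le> L\<close> show ?thesis by (simp add: \<Delta>_def mult.commute)
  next
    case False
    have "f t - real j * \<Delta> t \<le> f (t - j)" if "j \<le> t" for j
      using that
    proof (induction j)
      case (Suc j)
      have "f (t - j) = f (t - Suc j) + \<Delta> (t - Suc j)"
        using Suc.prems by (simp add: \<Delta>_def Suc_diff_Suc)
      then show ?case using Suc mono[of "t - Suc j" t] \<open>t < L\<close> by (simp add: algebra_simps)
    qed simp
    from this[of "t - s"] False show ?thesis by (simp add: \<Delta>_def algebra_simps)
  qed
qed

definition comb_MAN_load :: "nat \<Rightarrow> (nat \<Rightarrow> nat) \<Rightarrow> nat \<Rightarrow> real" where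
  "comb_MAN_load Lam Kv s = (\<Sum>l\<le>Lam. real (Kv l) * binom_ratio Lam l s)"

lemma comb_MAN_load_support_line:
  assumes "t \<le> Lam"
  obtains \<alpha> where "\<alpha> \<le> 0"
    "\<And>s. s \<le> Lam \<Longrightarrow> comb_MAN_load Lam Kv t + \<alpha> * (real s - real t) \<le> comb_MAN_load Lam Kv s"
proof
  define a where "a l = (if t < Lam then binom_ratio Lam l (t + 1) - binom_ratio Lam l t else 0)" for l
  have a_le: "a l \<le> 0" for l
    unfolding a_def using binom_ratio_Suc_le[of t Lam l] by simp
  have line: "binom_ratio Lam l t + a l * (real s - real t) \<le> binom_ratio Lam l s" if "s \<le> Lam" for l s
  proof (cases "t < Lam")
    case True
    then show ?thesis
      unfolding a_def using convex_sequence_support_line[of Lam "binom_ratio Lam l", OF binom_ratio_convex True that] by simp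
  next
    case False
    then show ?thesis
      unfolding a_def using binom_ratio_antimono[OF that] assms by simp
  qed
  show "(\<Sum>l\<le>Lam. real (Kv l) * a l) \<le> 0"
    using a_le by (intro sum_nonpos) (simp add: mult_nonneg_nonpos)
  fix s assume "s \<le> Lam"
  have "comb_MAN_load Lam Kv t + (\<Sum>l\<le>Lam. real (Kv l) * a l) * (real s - real t)
      = (\<Sum>l\<le>Lam. real (Kv l) * (binom_ratio Lam l t + a l * (real s - real t)))"
    by (simp add: comb_MAN_load_def distrib_left sum.distrib sum_distrib_right mult.assoc)
  also have "\<dots> \<le> comb_MAN_load Lam Kv s"
    unfolding comb_MAN_load_def using line[OF \<open>s \<le> Lam\<close>] by (intro sum_mono mult_left_mono) auto
  finally show "comb_MAN_load Lam Kv t + (\<Sum>l\<le>Lam. real (Kv l) * a l) * (real s - real t)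
      \<le> comb_MAN_load Lam Kv s" .
qed

text \<open>Jensen's inequality; monotonicity lets the average of \<open>g\<close> be at most \<open>t\<close> instead of
  equal to it.\<close>
lemma sum_comb_MAN_load_ge:
  assumes "finite X" "t \<le> Lam" "\<And>x. x \<in> X \<Longrightarrow> g x \<le> Lam"
    and "real (\<Sum>x\<in>X. g x) \<le> real t * real (card X)"
  shows "real (card X) * comb_MAN_load Lam Kv t \<le> (\<Sum>x\<in>X. comb_MAN_load Lam Kv (g x))"
proof -
  obtain \<alpha> where "\<alpha> \<le> 0" and line:
    "\<And>s. s \<le> Lam \<Longrightarrow> comb_MAN_load Lam Kv t + \<alpha> * (real s - real t) \<le> comb_MAN_load Lam Kv s"
    using comb_MAN_load_support_line[OF assms(2)] by blast
  have "0 \<le> \<alpha> * (real (\<Sum>x\<in>X. g x) - real t * real (card X))"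
    using \<open>\<alpha> \<le> 0\<close> assms(4) by (intro mult_nonpos_nonpos) auto
  also have "\<dots> = (\<Sum>x\<in>X. comb_MAN_load Lam Kv t + \<alpha> * (real (g x) - real t))
                 - real (card X) * comb_MAN_load Lam Kv t"
    by (simp add: sum.distrib sum_distrib_left sum_subtractf algebra_simps)
  also have "\<dots> \<le> (\<Sum>x\<in>X. comb_MAN_load Lam Kv (g x)) - real (card X) * comb_MAN_load Lam Kv t"
    using line assms(3) by (simp add: sum_mono)
  finally show ?thesis by simp
qed

section \<open>The genie bound\<close>

definition unseen_demanded_bits ::
    "'u set \<Rightarrow> nat \<Rightarrow> (nat \<Rightarrow> nat \<Rightarrow> nat set) \<Rightarrow> ('u \<Rightarrow> nat) \<Rightarrow> ('u \<Rightarrow> nat set) \<Rightarrow> (nat \<times> nat) set" where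
  "unseen_demanded_bits users B pl d V =
     (\<Union>u\<in>users. (\<lambda>i. (d u, i)) ` {i. i < B \<and> pl (d u) i \<inter> V u = {}})"

text \<open>Genie argument: enlarge the cache sets of the users to a chain \<open>V\<close>. The bits demanded by
  the user with the smallest set and not stored in it are decoded from the message alone; once
  they are known, the next user's missing side information is among them, and so on.\<close>
lemma nested_decoding_determines_files:
  fixes enc :: "(nat \<Rightarrow> nat \<Rightarrow> bool) \<Rightarrow> bool list"
  assumes decode: "\<forall>u\<in>users. \<exists>dec. \<forall>W. \<forall>i<B. dec (enc W) (known_bits N B pl (conn u) W) i = W (d u) i"
    and conn_V: "\<forall>u\<in>users. conn u \<subseteq> V u"
    and finite_V: "\<forall>u\<in>users. finite (V u)"
    and nested: "\<forall>u\<in>users. \<forall>w\<in>users. V u \<subseteq> V w \<or> V w \<subseteq> V u"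
    and enc_eq: "enc W = enc W'"
    and agree: "\<And>n i. (n, i) \<notin> unseen_demanded_bits users B pl d V \<Longrightarrow> W n i = W' n i"
  shows "W = W'"
proof -
  let ?S = "unseen_demanded_bits users B pl d V"
  have "\<forall>u\<in>users. card (V u) = k \<longrightarrow> (\<forall>i<B. W (d u) i = W' (d u) i)" for k
  proof (induction k rule: less_induct)
    case (less k)
    show ?case
    proof (intro ballI impI allI)
      fix u i assume u: "u \<in> users" and card_u: "card (V u) = k" and "i < B"
      obtain dec where dec: "\<forall>W. \<forall>i<B. dec (enc W) (known_bits N B pl (conn u) W) i = W (d u) i"
        using decode u by blast
      have "W n j = W' n j" if "pl n j \<inter> conn u \<noteq> {}" for n j
      proof (cases "(n, j) \<in> ?S")
        case True
        then obtain w where w: "w \<in> users" "n = d w" "j < B" "pl (d w) j \<inter> V w = {}"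
          unfolding unseen_demanded_bits_def by auto
        then have "\<not> V u \<subseteq> V w" using that conn_V u by blast
        then have "card (V w) < k"
          using nested u w(1) finite_V card_u by (metis psubset_card_mono psubset_eq)
        then show ?thesis using less.IH w by blast
      qed (rule agree)
      then have "known_bits N B pl (conn u) W = known_bits N B pl (conn u) W'"
        by (auto simp: known_bits_def)
      then show "W (d u) i = W' (d u) i" using dec enc_eq \<open>i < B\<close> by metis
    qed
  qed
  then have "W n i = W' n i" if "(n, i) \<in> ?S" for n i
    using that unfolding unseen_demanded_bits_def by blast
  then show ?thesis using agree by blast
qed

lemma load_ge_card_unseen_demanded_bits:
  assumes "delivers users conn N B pl d L"
    and "\<forall>u\<in>users. conn u \<subseteq> V u" "\<forall>u\<in>users. finite (V u)"
    and "\<forall>u\<in>users. \<forall>w\<in>users. V u \<subseteq> V w \<or> V w \<subseteq> V u"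
    and "finite users"
  shows "card (unseen_demanded_bits users B pl d V) \<le> L"
proof -
  let ?S = "unseen_demanded_bits users B pl d V"
  obtain enc :: "(nat \<Rightarrow> nat \<Rightarrow> bool) \<Rightarrow> bool list" where len: "\<forall>W. length (enc W) = L"
    and decode: "\<forall>u\<in>users. \<exists>dec. \<forall>W. \<forall>i<B. dec (enc W) (known_bits N B pl (conn u) W) i = W (d u) i"
    using assms(1) unfolding delivers_def by blast
  have "finite ?S" unfolding unseen_demanded_bits_def using assms(5) by auto
  have "inj_on (\<lambda>A. enc (\<lambda>n i. (n, i) \<in> A)) (Pow ?S)"
  proof (rule inj_onI)
    fix A A' assume "A \<in> Pow ?S" "A' \<in> Pow ?S" "enc (\<lambda>n i. (n, i) \<in> A) = enc (\<lambda>n i. (n, i) \<in> A')"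
    then have "(\<lambda>n i. (n, i) \<in> A) = (\<lambda>n i. (n, i) \<in> A')"
      using nested_decoding_determines_files[OF decode assms(2-4)] by blast
    then show "A = A'" by (metis pred_equals_eq2)
  qed
  then have "card (Pow ?S) \<le> card {xs :: bool list. set xs \<subseteq> UNIV \<and> length xs = L}"
    using len by (intro card_inj_on_le finite_lists_length_eq) auto
  also have "\<dots> = 2 ^ L" by (subst card_lists_length_eq) simp_all
  finally have "2 ^ card ?S \<le> (2 :: nat) ^ L"
    using \<open>finite ?S\<close> by (simp add: card_Pow)
  then show ?thesis by simp
qed

lemma card_unseen_demanded_bits:
  assumes "finite users" "inj_on d users"
  shows "card (unseen_demanded_bits users B pl d V) = (\<Sum>u\<in>users. card {i. i < B \<and> pl (d u) i \<inter> V u = {}})"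
  unfolding unseen_demanded_bits_def
  by (subst card_UN_disjoint) (use assms in \<open>auto simp: inj_on_def card_image\<close>)

section \<open>Optimality of the MAN load\<close>

lemma add_mod_inverse:
  fixes a N x :: nat
  assumes "x < N"
  shows "(a + x + (N - a mod N)) mod N = x"
proof -
  have "a mod N < N" using assms by simp
  then have "a + x + (N - a mod N) = x + N + a div N * N"
    using div_mult_mod_eq[of a N] by linarith
  then show ?thesis using assms by simp
qed

lemma bij_betw_add_mod:
  fixes a N :: nat
  shows "bij_betw (\<lambda>x. (a + x) mod N) {..<N} {..<N}"
proof (rule bij_betwI[where g = "\<lambda>y. (y + (N - a mod N)) mod N"])
  show "(\<lambda>x. (a + x) mod N) \<in> {..<N} \<rightarrow> {..<N}" by (cases "N = 0") auto
  show "(\<lambda>y. (y + (N - a mod N)) mod N) \<in> {..<N} \<rightarrow> {..<N}" by (cases "N = 0") auto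
  show "((a + x) mod N + (N - a mod N)) mod N = x" if "x \<in> {..<N}" for x
    using add_mod_inverse[of x N a] that by (simp only: mod_add_left_eq lessThan_iff)
  show "(a + (y + (N - a mod N)) mod N) mod N = y" if "y \<in> {..<N}" for y
    using add_mod_inverse[of y N a] that by (simp only: mod_add_right_eq add.assoc lessThan_iff)
qed

text \<open>The cyclic shifts of an injective assignment of files to users.\<close>
lemma cyclic_demands:
  fixes users :: "'u set"
  assumes "finite users" "card users \<le> N"
  obtains ds :: "nat \<Rightarrow> 'u \<Rightarrow> nat" where
    "\<And>s. ds s \<in> demands users N" "\<And>s. inj_on (ds s) users"
    "\<And>u. u \<in> users \<Longrightarrow> bij_betw (\<lambda>s. ds s u) {..<N} {..<N}"
proof -
  obtain e where e: "e ` users \<subseteq> {..<N}" "inj_on e users"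
    using card_le_inj[of users "{..<N}"] assms by auto
  define ds where "ds s = restrict (\<lambda>u. (e u + s) mod N) users" for s
  show ?thesis
  proof
    show "ds s \<in> demands users N" for s
      unfolding ds_def demands_def using e(1) by (auto intro: mod_less_divisor)
    show "inj_on (ds s) users" for s
    proof (rule inj_onI)
      fix u w assume u: "u \<in> users" and w: "w \<in> users" and "ds s u = ds s w"
      then have "(s + e u) mod N = (s + e w) mod N" by (simp add: ds_def add.commute)
      then have "e u = e w"
        using bij_betw_imp_inj_on[OF bij_betw_add_mod[of s N]] e(1) u w by (auto dest: inj_onD)
      then show "u = w" using e(2) u w by (auto dest: inj_onD)
    qed
    show "bij_betw (\<lambda>s. ds s u) {..<N} {..<N}" if "u \<in> users" for u
      using bij_betw_add_mod[of "e u" N] that by (simp add: ds_def)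
  qed
qed

lemma card_placement_le:
  assumes "uncoded_placement Lam N B pl" "n < N" "i < B"
  shows "card (pl n i) \<le> Lam"
  using assms card_mono[OF finite_lessThan, of "pl n i" Lam] unfolding uncoded_placement_def by simp

lemma sum_card_placement_eq_sum_card_cache_content:
  assumes "uncoded_placement Lam N B pl"
  shows "(\<Sum>(n, i)\<in>{..<N} \<times> {..<B}. card (pl n i)) = (\<Sum>l<Lam. card (cache_content N B pl l))"
proof -
  have "card (pl n i) = (\<Sum>l<Lam. of_bool (l \<in> pl n i))" if "n < N" "i < B" for n i
  proof -
    have "{..<Lam} \<inter> {l. l \<in> pl n i} = pl n i"
      using assms that unfolding uncoded_placement_def by auto
    then show ?thesis by simp
  qed
  then have "(\<Sum>(n, i)\<in>{..<N} \<times> {..<B}. card (pl n i))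
      = (\<Sum>(n, i)\<in>{..<N} \<times> {..<B}. \<Sum>l<Lam. of_bool (l \<in> pl n i))"
    by (intro sum.cong) auto
  also have "\<dots> = (\<Sum>l<Lam. \<Sum>(n, i)\<in>{..<N} \<times> {..<B}. of_bool (l \<in> pl n i))"
    unfolding split_def by (rule sum.swap)
  also have "\<dots> = (\<Sum>l<Lam. card (cache_content N B pl l))"
  proof (rule sum.cong[OF refl])
    fix l
    have "cache_content N B pl l = ({..<N} \<times> {..<B}) \<inter> {x. l \<in> pl (fst x) (snd x)}"
      unfolding cache_content_def by auto
    then show "(\<Sum>(n, i)\<in>{..<N} \<times> {..<B}. of_bool (l \<in> pl n i)) = card (cache_content N B pl l)"
      by (simp add: split_def)
  qed
  finally show ?thesis .
qed

lemma sum_card_placement_le: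
  assumes "uncoded_placement Lam N B pl"
    and "respects_cache_size Lam N B (real t * real N / real Lam) pl"
  shows "real (\<Sum>(n, i)\<in>{..<N} \<times> {..<B}. card (pl n i)) \<le> real t * real (card ({..<N} \<times> {..<B}))"
proof (cases "Lam = 0")
  case True
  then have "(\<Sum>(n, i)\<in>{..<N} \<times> {..<B}. card (pl n i)) = 0"
    using sum_card_placement_eq_sum_card_cache_content[OF assms(1)] by simp
  then show ?thesis by (metis mult_nonneg_nonneg of_nat_0 of_nat_0_le_iff)
next
  case False
  have "real (\<Sum>(n, i)\<in>{..<N} \<times> {..<B}. card (pl n i)) = (\<Sum>l<Lam. real (card (cache_content N B pl l)))"
    by (simp add: sum_card_placement_eq_sum_card_cache_content[OF assms(1)])
  also have "\<dots> \<le> (\<Sum>l<Lam. real t * real N / real Lam * real B)"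
    using assms(2) unfolding respects_cache_size_def by (intro sum_mono) auto
  also have "\<dots> = real t * real (card ({..<N} \<times> {..<B}))"
    using False by (simp add: card_cartesian_product)
  finally show ?thesis .
qed

lemma sum_permutations_card_comb_users_avoiding:
  assumes "T \<subseteq> {..<Lam}"
  shows "(\<Sum>xs\<in>permutations_of_set {..<Lam}.
            real (card {u \<in> comb_users Lam Kv. T \<inter> covering_prefix xs (fst u) = {}}))
       = fact Lam * comb_MAN_load Lam Kv (card T)"
proof -
  have "(\<Sum>xs\<in>permutations_of_set {..<Lam}.
            real (card {u \<in> comb_users Lam Kv. T \<inter> covering_prefix xs (fst u) = {}}))
      = (\<Sum>xs\<in>permutations_of_set {..<Lam}. \<Sum>k\<le>Lam.
            real (Kv k) * real (avoiding_prefix_length T xs choose k))"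
    by (intro sum.cong) (simp_all add: card_comb_users_avoiding)
  also have "\<dots> = (\<Sum>k\<le>Lam. real (Kv k) * (\<Sum>xs\<in>permutations_of_set {..<Lam}.
            real (avoiding_prefix_length T xs choose k)))"
    unfolding sum_distrib_left by (rule sum.swap)
  also have "\<dots> = fact Lam * comb_MAN_load Lam Kv (card T)"
    using sum_permutations_avoiding_prefix_choose[of "{..<Lam}" T] assms
    by (simp add: comb_MAN_load_def sum_distrib_left mult_ac)
  finally show ?thesis .
qed

lemma sum_permutations_genie_counts:
  assumes "uncoded_placement Lam N B pl" "n < N"
  shows "(\<Sum>xs\<in>permutations_of_set {..<Lam}. \<Sum>u\<in>comb_users Lam Kv.
            real (card {i. i < B \<and> pl n i \<inter> covering_prefix xs (fst u) = {}}))
       = fact Lam * (\<Sum>i<B. comb_MAN_load Lam Kv (card (pl n i)))"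
proof -
  let ?P = "permutations_of_set {..<Lam}" and ?U = "comb_users Lam Kv"
  let ?avoid = "\<lambda>i xs u. pl n i \<inter> covering_prefix xs (fst u) = {}"
  have "(\<Sum>xs\<in>?P. \<Sum>u\<in>?U. real (card {i. i < B \<and> ?avoid i xs u}))
      = (\<Sum>xs\<in>?P. \<Sum>u\<in>?U. \<Sum>i<B. of_bool (?avoid i xs u))"
    by (simp add: Int_def conj_commute)
  also have "\<dots> = (\<Sum>xs\<in>?P. \<Sum>i<B. \<Sum>u\<in>?U. of_bool (?avoid i xs u))"
    by (intro sum.cong refl sum.swap)
  also have "\<dots> = (\<Sum>i<B. \<Sum>xs\<in>?P. \<Sum>u\<in>?U. of_bool (?avoid i xs u))"
    by (rule sum.swap)
  also have "\<dots> = (\<Sum>i<B. fact Lam * comb_MAN_load Lam Kv (card (pl n i)))"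
  proof (rule sum.cong[OF refl])
    fix i assume "i \<in> {..<B}"
    then have "pl n i \<subseteq> {..<Lam}" using assms unfolding uncoded_placement_def by auto
    then show "(\<Sum>xs\<in>?P. \<Sum>u\<in>?U. of_bool (?avoid i xs u)) = fact Lam * comb_MAN_load Lam Kv (card (pl n i))"
      using sum_permutations_card_comb_users_avoiding[of "pl n i" Lam Kv] by (simp add: Int_def conj_commute)
  qed
  finally show ?thesis by (simp add: sum_distrib_left)
qed

lemma achieves_loadE:
  assumes "achieves_load users conn N B pl R" "finite users" "B > 0"
  obtains Lf where "\<And>d. d \<in> demands users N \<Longrightarrow> delivers users conn N B pl d (Lf d)"
    "\<And>d. d \<in> demands users N \<Longrightarrow> real (Lf d) \<le> R * real B"
proof -
  obtain Lf where deliv: "\<forall>d\<in>demands users N. delivers users conn N B pl d (Lf d)"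
    and max: "Max ((\<lambda>d. real (Lf d) / real B) ` demands users N) = R"
    using assms(1) unfolding achieves_load_def by blast
  have "finite (demands users N)" using assms(2) unfolding demands_def by (auto intro: finite_PiE)
  then have "real (Lf d) / real B \<le> R" if "d \<in> demands users N" for d
    unfolding max[symmetric] using that by (intro Max_ge) auto
  then have "real (Lf d) \<le> R * real B" if "d \<in> demands users N" for d
    using that assms(3) by (simp add: divide_le_eq)
  with deliv show ?thesis by (intro that) auto
qed

lemma achieves_load_nonneg:
  assumes "achieves_load users conn N B pl R" "finite users" "demands users N \<noteq> {}"
  shows "0 \<le> R"
proof -
  obtain Lf where "Max ((\<lambda>d. real (Lf d) / real B) ` demands users N) = R"
    using assms(1) unfolding achieves_load_def by blast
  moreover have "finite (demands users N)"
    using assms(2) unfolding demands_def by (auto intro: finite_PiE)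
  ultimately have "R \<in> (\<lambda>d. real (Lf d) / real B) ` demands users N"
    using assms(3) Max_in by blast
  then show ?thesis by auto
qed

lemma sum_genie_counts_le_load:
  assumes "delivers (comb_users Lam Kv) comb_conn N B pl d L" "inj_on d (comb_users Lam Kv)"
    and "xs \<in> permutations_of_set {..<Lam}"
  shows "(\<Sum>u\<in>comb_users Lam Kv. card {i. i < B \<and> pl (d u) i \<inter> covering_prefix xs (fst u) = {}}) \<le> L"
proof -
  have "set xs = {..<Lam}" using assms(3) by (simp add: permutations_of_set_def)
  then have "\<forall>u\<in>comb_users Lam Kv. comb_conn u \<subseteq> covering_prefix xs (fst u)"
    unfolding comb_conn_def comb_users_def using subset_covering_prefix[of _ xs] by auto
  moreover have "\<forall>u\<in>comb_users Lam Kv. \<forall>w\<in>comb_users Lam Kv.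
      covering_prefix xs (fst u) \<subseteq> covering_prefix xs (fst w) \<or> covering_prefix xs (fst w) \<subseteq> covering_prefix xs (fst u)"
    by (simp add: covering_prefix_linear)
  ultimately have "card (unseen_demanded_bits (comb_users Lam Kv) B pl d (\<lambda>u. covering_prefix xs (fst u))) \<le> L"
    using assms(1) by (intro load_ge_card_unseen_demanded_bits) auto
  then show ?thesis by (simp add: card_unseen_demanded_bits[OF finite_comb_users assms(2)])
qed

lemma sum_cyclic_genie_counts:
  assumes "uncoded_placement Lam N B pl"
    and "\<And>u. u \<in> comb_users Lam Kv \<Longrightarrow> bij_betw (\<lambda>s. ds s u) {..<N} {..<N}"
  shows "(\<Sum>s<N. \<Sum>xs\<in>permutations_of_set {..<Lam}. \<Sum>u\<in>comb_users Lam Kv.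
            real (card {i. i < B \<and> pl (ds s u) i \<inter> covering_prefix xs (fst u) = {}}))
       = fact Lam * (\<Sum>x\<in>{..<N} \<times> {..<B}. comb_MAN_load Lam Kv (card (pl (fst x) (snd x))))"
proof -
  let ?U = "comb_users Lam Kv" and ?P = "permutations_of_set {..<Lam}"
  define cnt where "cnt n u xs = real (card {i. i < B \<and> pl n i \<inter> covering_prefix xs (fst u) = {}})"
    for n and u :: "nat set \<times> nat" and xs
  have "(\<Sum>s<N. \<Sum>xs\<in>?P. \<Sum>u\<in>?U. cnt (ds s u) u xs) = (\<Sum>xs\<in>?P. \<Sum>s<N. \<Sum>u\<in>?U. cnt (ds s u) u xs)"
    by (rule sum.swap)
  also have "\<dots> = (\<Sum>xs\<in>?P. \<Sum>u\<in>?U. \<Sum>s<N. cnt (ds s u) u xs)"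
    by (intro sum.cong refl sum.swap)
  also have "\<dots> = (\<Sum>xs\<in>?P. \<Sum>u\<in>?U. \<Sum>n<N. cnt n u xs)"
    using assms(2) by (intro sum.cong refl sum.reindex_bij_betw)
  also have "\<dots> = (\<Sum>xs\<in>?P. \<Sum>n<N. \<Sum>u\<in>?U. cnt n u xs)"
    by (intro sum.cong refl sum.swap)
  also have "\<dots> = (\<Sum>n<N. \<Sum>xs\<in>?P. \<Sum>u\<in>?U. cnt n u xs)"
    by (rule sum.swap)
  also have "\<dots> = (\<Sum>n<N. fact Lam * (\<Sum>i<B. comb_MAN_load Lam Kv (card (pl n i))))"
    by (intro sum.cong refl) (simp add: cnt_def sum_permutations_genie_counts[OF assms(1)])
  also have "\<dots> = fact Lam * (\<Sum>x\<in>{..<N} \<times> {..<B}. comb_MAN_load Lam Kv (card (pl (fst x) (snd x))))"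
    by (simp add: sum_distrib_left sum.cartesian_product split_def)
  finally show ?thesis unfolding cnt_def .
qed

text \<open>The genie bound for a demand with distinct requests, averaged over all orderings of the
  caches and all cyclic shifts of the demand.\<close>
lemma comb_MAN_load_le_achieved_load:
  assumes Ncard: "card (comb_users Lam Kv) \<le> N" and "t \<le> Lam" "B > 0"
    and unc: "uncoded_placement Lam N B pl"
    and csz: "respects_cache_size Lam N B (real t * real N / real Lam) pl"
    and ach: "achieves_load (comb_users Lam Kv) comb_conn N B pl R"
  shows "comb_MAN_load Lam Kv t \<le> R"
proof (cases "comb_users Lam Kv = {}")
  case True
  have "Kv l = 0" if "l \<le> Lam" for l
  proof (rule ccontr)
    assume "Kv l \<noteq> 0"
    then have "({..<l}, 0) \<in> comb_users Lam Kv" using that unfolding comb_users_def by auto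
    then show False using True by simp
  qed
  then have "comb_MAN_load Lam Kv t = 0" by (simp add: comb_MAN_load_def)
  moreover have "demands (comb_users Lam Kv) N \<noteq> {}" using True by (simp add: demands_def)
  ultimately show ?thesis using achieves_load_nonneg[OF ach] by simp
next
  case False
  let ?U = "comb_users Lam Kv" and ?P = "permutations_of_set {..<Lam}" and ?X = "{..<N} \<times> {..<B}"
  let ?cnt = "\<lambda>n u xs. real (card {i. i < B \<and> pl n i \<inter> covering_prefix xs (fst u) = {}})"
  obtain Lf where deliv: "\<And>d. d \<in> demands ?U N \<Longrightarrow> delivers ?U comb_conn N B pl d (Lf d)"
    and Lf_le: "\<And>d. d \<in> demands ?U N \<Longrightarrow> real (Lf d) \<le> R * real B"
    using achieves_loadE[OF ach finite_comb_users \<open>B > 0\<close>] by blast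
  obtain ds where ds: "\<And>s. ds s \<in> demands ?U N" "\<And>s. inj_on (ds s) ?U"
    "\<And>u. u \<in> ?U \<Longrightarrow> bij_betw (\<lambda>s. ds s u) {..<N} {..<N}"
    using cyclic_demands[OF finite_comb_users Ncard] by blast
  have "(\<Sum>s<N. \<Sum>xs\<in>?P. \<Sum>u\<in>?U. ?cnt (ds s u) u xs) \<le> (\<Sum>s<N. \<Sum>xs\<in>?P. R * real B)"
  proof (intro sum_mono)
    fix s xs assume "xs \<in> ?P"
    then have "(\<Sum>u\<in>?U. ?cnt (ds s u) u xs) \<le> real (Lf (ds s))"
      using sum_genie_counts_le_load[OF deliv[OF ds(1)] ds(2)] by (simp flip: of_nat_sum)
    then show "(\<Sum>u\<in>?U. ?cnt (ds s u) u xs) \<le> R * real B"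
      using Lf_le[OF ds(1)] by (rule order.trans)
  qed
  also have "\<dots> = fact Lam * (real (card ?X) * R)" by (simp add: card_cartesian_product)
  finally have upper: "fact Lam * (\<Sum>x\<in>?X. comb_MAN_load Lam Kv (card (pl (fst x) (snd x))))
      \<le> fact Lam * (real (card ?X) * R)"
    by (simp only: sum_cyclic_genie_counts[OF unc ds(3)])
  have "real (card ?X) * comb_MAN_load Lam Kv t
      \<le> (\<Sum>x\<in>?X. comb_MAN_load Lam Kv (card (pl (fst x) (snd x))))"
    by (rule sum_comb_MAN_load_ge)
      (use sum_card_placement_le[OF unc csz] \<open>t \<le> Lam\<close>
        in \<open>auto simp: split_def intro: card_placement_le[OF unc]\<close>)
  also have "\<dots> \<le> real (card ?X) * R"
    using upper by (rule mult_left_le_imp_le) simp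
  finally have "real (card ?X) * comb_MAN_load Lam Kv t \<le> real (card ?X) * R" .
  moreover have "N > 0" using False Ncard card_gt_0_iff[of ?U] by simp
  then have "real (card ?X) > 0" using \<open>B > 0\<close> by (simp add: card_cartesian_product)
  ultimately show ?thesis by (rule mult_left_le_imp_le)
qed

section \<open>Coded delivery for the MAN placement\<close>

lemma eq_if_odd_card_filter_eq:
  assumes "finite A" "x \<in> A" "\<And>y. y \<in> A - {x} \<Longrightarrow> P y = Q y"
    and "odd (card {y \<in> A. P y}) = odd (card {y \<in> A. Q y})"
  shows "P x = Q x"
proof -
  have split: "card {y \<in> A. R y} = card {y \<in> A - {x}. R y} + of_bool (R x)" for R
  proof -
    have "{y \<in> A. R y} = {y \<in> A - {x}. R y} \<union> (if R x then {x} else {})"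
      using assms(2) by auto
    then show ?thesis using assms(1) by (simp add: card_Un_disjoint)
  qed
  have "{y \<in> A - {x}. P y} = {y \<in> A - {x}. Q y}" using assms(3) by auto
  then show ?thesis using assms(4) split[of P] split[of Q] by (cases "P x"; cases "Q x") auto
qed

lemma exists_decoder:
  assumes "\<And>W W'. enc W = enc W' \<Longrightarrow> side W = side W' \<Longrightarrow> val W = val W'"
  shows "\<exists>dec. \<forall>W. dec (enc W) (side W) = val W"
proof -
  define dec where "dec c k = val (SOME W. enc W = c \<and> side W = k)" for c k
  have "dec (enc W) (side W) = val W" for W
    unfolding dec_def using someI[of "\<lambda>W'. enc W' = enc W \<and> side W' = side W" W] assms by blast
  then show ?thesis by blast
qed

lemma card_subsets_containing:
  assumes "finite A" "a \<in> A"
  shows "card {T. T \<subseteq> A \<and> card T = Suc k \<and> a \<in> T} = (card A - 1) choose k"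
proof -
  have "bij_betw (insert a) {T. T \<subseteq> A - {a} \<and> card T = k} {T. T \<subseteq> A \<and> card T = Suc k \<and> a \<in> T}"
  proof (rule bij_betw_byWitness[where f' = "\<lambda>T. T - {a}"])
    show "insert a ` {T. T \<subseteq> A - {a} \<and> card T = k} \<subseteq> {T. T \<subseteq> A \<and> card T = Suc k \<and> a \<in> T}"
    proof
      fix T assume "T \<in> insert a ` {T. T \<subseteq> A - {a} \<and> card T = k}"
      then obtain T' where "T = insert a T'" "T' \<subseteq> A - {a}" "card T' = k" by blast
      moreover have "finite T'" "a \<notin> T'" using \<open>T' \<subseteq> A - {a}\<close> assms(1) finite_subset by auto
      ultimately show "T \<in> {T. T \<subseteq> A \<and> card T = Suc k \<and> a \<in> T}" using assms(2) by auto
    qed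
    show "(\<lambda>T. T - {a}) ` {T. T \<subseteq> A \<and> card T = Suc k \<and> a \<in> T} \<subseteq> {T. T \<subseteq> A - {a} \<and> card T = k}"
      using assms by (auto simp: finite_subset)
  qed auto
  then show ?thesis
    using n_subsets[of "A - {a}" k] assms by (simp add: bij_betw_same_card[symmetric])
qed

locale MAN_delivery =
  fixes Lam N B t :: nat and pl :: "nat \<Rightarrow> nat \<Rightarrow> nat set" and Kv :: "nat \<Rightarrow> nat"
  assumes t_le: "t \<le> Lam" and B_pos: "B > 0" and MAN: "MAN_placement Lam N B t pl"
begin

definition subfile_size :: nat where "subfile_size = B div (Lam choose t)"

definition subfile :: "nat \<Rightarrow> nat set \<Rightarrow> nat set" where
  "subfile n T = {i. i < B \<and> pl n i = T}"

definition subfile_bit :: "nat \<Rightarrow> nat set \<Rightarrow> nat \<Rightarrow> nat" where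
  "subfile_bit n T p = sorted_list_of_set (subfile n T) ! p"

lemma B_eq_subfile_size: "B = subfile_size * (Lam choose t)"
  using MAN unfolding MAN_placement_def subfile_size_def by simp

lemma subfile_size_pos: "subfile_size > 0"
  using B_eq_subfile_size B_pos by (cases subfile_size) auto

lemma placement_subset: "n < N \<Longrightarrow> i < B \<Longrightarrow> pl n i \<subseteq> {..<Lam}"
  using MAN unfolding MAN_placement_def by blast

lemma card_placement: "n < N \<Longrightarrow> i < B \<Longrightarrow> card (pl n i) = t"
  using MAN unfolding MAN_placement_def by blast

lemma uncoded: "uncoded_placement Lam N B pl"
  unfolding uncoded_placement_def using placement_subset by blast

lemma card_subfile: "n < N \<Longrightarrow> T \<subseteq> {..<Lam} \<Longrightarrow> card T = t \<Longrightarrow> card (subfile n T) = subfile_size"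
  using MAN unfolding MAN_placement_def subfile_def subfile_size_def by blast

lemma subfile_bit_in:
  assumes "n < N" "T \<subseteq> {..<Lam}" "card T = t" "p < subfile_size"
  shows "subfile_bit n T p \<in> subfile n T"
proof -
  have "finite (subfile n T)" by (simp add: subfile_def)
  then show ?thesis
    using card_subfile[OF assms(1-3)] assms(4) unfolding subfile_bit_def
    by (metis distinct_card distinct_sorted_list_of_set nth_mem set_sorted_list_of_set)
qed

lemma subfile_bit_surj:
  assumes "n < N" "i < B"
  obtains p where "p < subfile_size" "subfile_bit n (pl n i) p = i"
proof -
  have "finite (subfile n (pl n i))" "i \<in> subfile n (pl n i)" using assms by (simp_all add: subfile_def)
  moreover have "card (subfile n (pl n i)) = subfile_size"
    using card_subfile assms placement_subset card_placement by blast
  ultimately show ?thesis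
    using that unfolding subfile_bit_def by (metis in_set_conv_nth distinct_card
        distinct_sorted_list_of_set set_sorted_list_of_set)
qed

definition transmissions :: "(nat set \<times> nat \<times> nat) set" where
  "transmissions = {(S, j, p). S \<subseteq> {..<Lam} \<and> t \<le> card S \<and> j < Kv (card S - t) \<and> p < subfile_size}"

text \<open>The XOR, over the users \<open>(U, j)\<close> with \<open>U \<subseteq> S\<close> and \<open>|U| = |S| - t\<close>, of bit \<open>p\<close> of
  the subfile requested by \<open>(U, j)\<close> and stored exactly on \<open>S - U\<close>. Each of these users is
  connected to a cache storing every summand but its own.\<close>
definition coded_bit :: "(nat set \<times> nat \<Rightarrow> nat) \<Rightarrow> (nat \<Rightarrow> nat \<Rightarrow> bool) \<Rightarrow> nat set \<times> nat \<times> nat \<Rightarrow> bool" where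
  "coded_bit d W x = (case x of (S, j, p) \<Rightarrow>
     odd (card {U. U \<subseteq> S \<and> card U = card S - t \<and> W (d (U, j)) (subfile_bit (d (U, j)) (S - U) p)}))"

definition transmission_list :: "(nat set \<times> nat \<times> nat) list" where
  "transmission_list = (SOME xs. distinct xs \<and> set xs = transmissions)"

definition message :: "(nat set \<times> nat \<Rightarrow> nat) \<Rightarrow> (nat \<Rightarrow> nat \<Rightarrow> bool) \<Rightarrow> bool list" where
  "message d W = map (coded_bit d W) transmission_list"

lemma transmissions_Sigma:
  "transmissions = Sigma {S \<in> Pow {..<Lam}. t \<le> card S} (\<lambda>S. {..<Kv (card S - t)} \<times> {..<subfile_size})"
  unfolding transmissions_def by auto

lemma transmission_list: "distinct transmission_list" "set transmission_list = transmissions"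
proof -
  have "finite transmissions" unfolding transmissions_Sigma by auto
  then have "\<exists>xs. distinct xs \<and> set xs = transmissions" using finite_distinct_list by blast
  then show "distinct transmission_list" "set transmission_list = transmissions"
    unfolding transmission_list_def by (metis (mono_tags, lifting) someI_ex)+
qed

lemma length_message: "length (message d W) = card transmissions"
  unfolding message_def using transmission_list distinct_card by fastforce

lemma other_summand_seen:
  assumes "d \<in> demands (comb_users Lam Kv) N" "(U, j) \<in> comb_users Lam Kv"
    and "S \<subseteq> {..<Lam}" "finite S" "U \<subseteq> S" "card S = t + card U"
    and "U' \<subseteq> S" "card U' = card U" "U' \<noteq> U" "p < subfile_size"
  shows "d (U', j) < N \<and> subfile_bit (d (U', j)) (S - U') p < B
    \<and> pl (d (U', j)) (subfile_bit (d (U', j)) (S - U') p) \<inter> U \<noteq> {}"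
proof -
  have "(U', j) \<in> comb_users Lam Kv"
    using assms(2,3,7,8) unfolding comb_users_def by auto
  then have "d (U', j) < N" using assms(1) unfolding demands_def by auto
  moreover have "S - U' \<subseteq> {..<Lam}" "card (S - U') = t"
    using assms(3,4,6-8) by (auto simp: card_Diff_subset finite_subset)
  ultimately have "subfile_bit (d (U', j)) (S - U') p \<in> subfile (d (U', j)) (S - U')"
    using subfile_bit_in assms(10) by blast
  moreover have "\<not> U \<subseteq> U'" using assms(4,7-9) by (metis card_subset_eq finite_subset)
  then have "(S - U') \<inter> U \<noteq> {}" using assms(5) by blast
  ultimately show ?thesis using \<open>d (U', j) < N\<close> unfolding subfile_def by auto
qed

lemma message_decodable:
  assumes d: "d \<in> demands (comb_users Lam Kv) N" and u: "(U, j) \<in> comb_users Lam Kv"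
    and msg: "message d W = message d W'"
    and known: "known_bits N B pl U W = known_bits N B pl U W'"
    and "i < B"
  shows "W (d (U, j)) i = W' (d (U, j)) i"
proof -
  have d_less: "d w < N" if "w \<in> comb_users Lam Kv" for w
    using d that unfolding demands_def by auto
  have seen: "W n' i' = W' n' i'" if "n' < N" "i' < B" "pl n' i' \<inter> U \<noteq> {}" for n' i'
    using fun_cong[OF fun_cong[OF known, of n'], of i'] that unfolding known_bits_def by simp
  define n where "n = d (U, j)"
  have "n < N" unfolding n_def using d_less[OF u] .
  define T where "T = pl n i"
  have T: "T \<subseteq> {..<Lam}" "card T = t"
    unfolding T_def using placement_subset card_placement \<open>n < N\<close> \<open>i < B\<close> by auto
  have U: "U \<subseteq> {..<Lam}" "j < Kv (card U)" using u unfolding comb_users_def by auto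
  show ?thesis
  proof (cases "T \<inter> U = {}")
    case False
    then show ?thesis using seen \<open>n < N\<close> \<open>i < B\<close> unfolding T_def n_def by blast
  next
    case True
    obtain p where "p < subfile_size" and p: "subfile_bit n T p = i"
      using subfile_bit_surj[OF \<open>n < N\<close> \<open>i < B\<close>] unfolding T_def by blast
    define S where "S = T \<union> U"
    have "finite S" "S \<subseteq> {..<Lam}" unfolding S_def using T U finite_subset by auto
    have card_S: "card S = t + card U"
      unfolding S_def using True T U by (simp add: card_Un_disjoint finite_subset)
    define A where "A = {U'. U' \<subseteq> S \<and> card U' = card S - t}"
    define summand where "summand (V :: nat \<Rightarrow> nat \<Rightarrow> bool) U' = V (d (U', j)) (subfile_bit (d (U', j)) (S - U') p)" for V U'
    have "(S, j, p) \<in> transmissions"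
      unfolding transmissions_def using \<open>S \<subseteq> {..<Lam}\<close> card_S U \<open>p < subfile_size\<close> by simp
    then have "coded_bit d W (S, j, p) = coded_bit d W' (S, j, p)"
      using msg transmission_list(2) unfolding message_def by (metis map_eq_conv)
    then have parity: "odd (card {U' \<in> A. summand W U'}) = odd (card {U' \<in> A. summand W' U'})"
      unfolding coded_bit_def A_def summand_def by simp
    have "summand W U' = summand W' U'" if "U' \<in> A - {U}" for U'
    proof -
      have "U \<subseteq> S" "U' \<subseteq> S" "card U' = card U" "U' \<noteq> U"
        using that card_S unfolding A_def S_def by auto
      then show ?thesis
        using other_summand_seen[OF d u \<open>S \<subseteq> {..<Lam}\<close> \<open>finite S\<close> _ card_S _ _ _ \<open>p < subfile_size\<close>] seen
        unfolding summand_def by blast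
    qed
    moreover have "U \<in> A" unfolding A_def S_def using card_S S_def by auto
    ultimately have "summand W U = summand W' U"
      using eq_if_odd_card_filter_eq[OF _ _ _ parity] \<open>finite S\<close> unfolding A_def by simp
    moreover have "S - U = T" unfolding S_def using True by auto
    ultimately show ?thesis unfolding summand_def n_def using p n_def by simp
  qed
qed

lemma delivers_message:
  assumes "d \<in> demands (comb_users Lam Kv) N"
  shows "delivers (comb_users Lam Kv) comb_conn N B pl d (card transmissions)"
  unfolding delivers_def
proof (intro exI[of _ "message d"] conjI ballI allI)
  show "length (message d W) = card transmissions" for W by (rule length_message)
  fix u assume "u \<in> comb_users Lam Kv"
  then obtain U j where u: "u = (U, j)" "(U, j) \<in> comb_users Lam Kv" by (cases u) auto
  have "\<exists>dec. \<forall>W. dec (message d W) (known_bits N B pl (comb_conn u) W) = (\<lambda>i. if i < B then W (d u) i else False)"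
    by (rule exists_decoder) (use message_decodable[OF assms u(2)] in \<open>auto simp: u comb_conn_def\<close>)
  then show "\<exists>dec. \<forall>W. \<forall>i<B. dec (message d W) (known_bits N B pl (comb_conn u) W) i = W (d u) i"
    by (metis (full_types))
qed

lemma card_transmissions: "card transmissions = subfile_size * (\<Sum>l = 0..Lam - t. Kv l * (Lam choose (t + l)))"
proof -
  have "card transmissions = (\<Sum>S\<in>{S \<in> Pow {..<Lam}. t \<le> card S}. Kv (card S - t) * subfile_size)"
    unfolding transmissions_Sigma by (subst card_SigmaI) (auto simp: card_cartesian_product)
  also have "\<dots> = (\<Sum>S\<in>Pow {..<Lam}. if t \<le> card S then Kv (card S - t) * subfile_size else 0)"
    by (rule sum.inter_filter) simp
  also have "\<dots> = (\<Sum>k\<le>Lam. (Lam choose k) * (if t \<le> k then Kv (k - t) * subfile_size else 0))"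
    using sum_Pow_card[of "{..<Lam}" "\<lambda>k. if t \<le> k then Kv (k - t) * subfile_size else 0"] by simp
  also have "\<dots> = (\<Sum>k\<in>{t..Lam}. (Lam choose k) * (Kv (k - t) * subfile_size))"
    by (rule sum.mono_neutral_cong_right) auto
  also have "\<dots> = (\<Sum>l = 0..Lam - t. (Lam choose (t + l)) * (Kv l * subfile_size))"
    using t_le by (intro sum.reindex_bij_witness[of _ "\<lambda>l. t + l" "\<lambda>k. k - t"]) auto
  finally show ?thesis by (simp add: sum_distrib_left mult_ac)
qed

lemma achieves_MAN_load:
  assumes "card (comb_users Lam Kv) \<le> N"
  shows "achieves_load (comb_users Lam Kv) comb_conn N B pl
     ((\<Sum>l = 0..Lam - t. real (Kv l) * real (Lam choose (t + l))) / real (Lam choose t))"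
  unfolding achieves_load_def
proof (intro exI[of _ "\<lambda>d. card transmissions"] conjI ballI)
  show "delivers (comb_users Lam Kv) comb_conn N B pl d (card transmissions)"
    if "d \<in> demands (comb_users Lam Kv) N" for d
    using that by (rule delivers_message)
  have "N > 0 \<or> comb_users Lam Kv = {}" using assms by (auto simp: card_gt_0_iff)
  then have "demands (comb_users Lam Kv) N \<noteq> {}" unfolding demands_def by (auto simp: PiE_eq_empty_iff)
  then have "(\<lambda>d. real (card transmissions) / real B) ` demands (comb_users Lam Kv) N
      = {real (card transmissions) / real B}" by auto
  moreover have "real (card transmissions) / real B
      = (\<Sum>l = 0..Lam - t. real (Kv l) * real (Lam choose (t + l))) / real (Lam choose t)"
    using subfile_size_pos unfolding card_transmissions by (subst B_eq_subfile_size) simp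
  ultimately show "Max ((\<lambda>d. real (card transmissions) / real B) ` demands (comb_users Lam Kv) N)
      = (\<Sum>l = 0..Lam - t. real (Kv l) * real (Lam choose (t + l))) / real (Lam choose t)"
    by simp
qed

lemma card_cache_content:
  assumes "l < Lam"
  shows "card (cache_content N B pl l) = N * (card {T. T \<subseteq> {..<Lam} \<and> card T = t \<and> l \<in> T} * subfile_size)"
proof -
  let ?TT = "{T. T \<subseteq> {..<Lam} \<and> card T = t \<and> l \<in> T}"
  have "card {i. i < B \<and> l \<in> pl n i} = card ?TT * subfile_size" if "n < N" for n
  proof -
    have union: "{i. i < B \<and> l \<in> pl n i} = (\<Union>T\<in>?TT. subfile n T)"
      unfolding subfile_def using placement_subset card_placement that by auto
    have "finite ?TT" by (rule finite_subset[of _ "Pow {..<Lam}"]) auto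
    then have "card (\<Union>T\<in>?TT. subfile n T) = (\<Sum>T\<in>?TT. card (subfile n T))"
      by (intro card_UN_disjoint) (auto simp: subfile_def)
    also have "\<dots> = card ?TT * subfile_size" using card_subfile[OF that] by simp
    finally show ?thesis using union by simp
  qed
  moreover have "cache_content N B pl l = (\<Union>n<N. (\<lambda>i. (n, i)) ` {i. i < B \<and> l \<in> pl n i})"
    unfolding cache_content_def by auto
  moreover have "card (\<Union>n<N. (\<lambda>i. (n, i)) ` {i. i < B \<and> l \<in> pl n i})
      = (\<Sum>n<N. card ((\<lambda>i. (n, i)) ` {i. i < B \<and> l \<in> pl n i}))"
    by (rule card_UN_disjoint) auto
  ultimately show ?thesis by (simp add: card_image inj_on_def)
qed

lemma respects_cache_size: "respects_cache_size Lam N B (real t * real N / real Lam) pl"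
  unfolding respects_cache_size_def
proof (intro allI impI)
  fix l assume "l < Lam"
  have "Lam * card {T. T \<subseteq> {..<Lam} \<and> card T = t \<and> l \<in> T} = t * (Lam choose t)"
  proof (cases t)
    case 0
    then have "{T. T \<subseteq> {..<Lam} \<and> card T = t \<and> l \<in> T} = {}" by (auto simp: finite_subset)
    then show ?thesis using 0 by simp
  next
    case (Suc k)
    then show ?thesis
      using card_subsets_containing[of "{..<Lam}" l k] \<open>l < Lam\<close> times_binomial_minus1_eq[of t Lam]
      by simp
  qed
  then have "Lam * card (cache_content N B pl l) = t * N * (subfile_size * (Lam choose t))"
    unfolding card_cache_content[OF \<open>l < Lam\<close>] by (simp add: ac_simps)
  then have "Lam * card (cache_content N B pl l) = t * N * B"
    by (simp only: B_eq_subfile_size[symmetric])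
  then have "real Lam * real (card (cache_content N B pl l)) = real t * real N * real B"
    by (metis of_nat_mult)
  then show "real (card (cache_content N B pl l)) \<le> real t * real N / real Lam * real B"
    using \<open>l < Lam\<close> by (simp add: field_simps)
qed

end

lemma exists_MAN_placement:
  assumes "t \<le> Lam"
  obtains pl where "MAN_placement Lam N (Lam choose t) t pl"
proof -
  let ?TS = "{T. T \<subseteq> {..<Lam} \<and> card T = t}"
  have "finite ?TS" by (rule finite_subset[of _ "Pow {..<Lam}"]) auto
  moreover have "card ?TS = Lam choose t" using n_subsets[of "{..<Lam}" t] by simp
  ultimately obtain g where g: "bij_betw g {..<Lam choose t} ?TS"
    using finite_same_card_bij[of "{..<Lam choose t}" ?TS] by auto
  have g_in: "g i \<in> ?TS" if "i < Lam choose t" for i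
    using bij_betw_apply[OF g] that by simp
  have "MAN_placement Lam N (Lam choose t) t (\<lambda>n. g)"
    unfolding MAN_placement_def
  proof (intro conjI allI impI)
    fix n T assume "T \<subseteq> {..<Lam} \<and> card T = t"
    then have "T \<in> g ` {..<Lam choose t}" using bij_betw_imp_surj_on[OF g] by simp
    then obtain i where "i < Lam choose t" "g i = T" by auto
    then have "{i'. i' < Lam choose t \<and> g i' = T} = {i}"
      using bij_betw_imp_inj_on[OF g] unfolding inj_on_def by auto
    then show "card {i'. i' < Lam choose t \<and> g i' = T} = (Lam choose t) div (Lam choose t)"
      using assms by simp
  qed (use g_in in auto)
  then show ?thesis by (rule that)
qed

lemma comb_MAN_load_eq:
  assumes "t \<le> Lam"
  shows "(\<Sum>l = 0..Lam - t. real (Kv l) * real (Lam choose (t + l))) / real (Lam choose t)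
       = comb_MAN_load Lam Kv t"
proof -
  have "(\<Sum>l = 0..Lam - t. real (Kv l) * real (Lam choose (t + l)))
      = (\<Sum>l\<le>Lam. real (Kv l) * real (Lam choose (t + l)))"
    by (rule sum.mono_neutral_left) auto
  then show ?thesis
    unfolding comb_MAN_load_def binom_ratio_def by (simp add: sum_divide_distrib add.commute)
qed

theorem corollary1:
  fixes Lam N t :: nat and Kv :: "nat \<Rightarrow> nat"
  assumes "N \<ge> (\<Sum>l\<le>Lam. Kv l * (Lam choose l))"
    and "t \<le> Lam"
  shows "(\<forall>B pl. B > 0 \<and> MAN_placement Lam N B t pl \<longrightarrow>
            uncoded_placement Lam N B pl \<and>
            respects_cache_size Lam N B (real t * real N / real Lam) pl \<and>
            achieves_load (comb_users Lam Kv) comb_conn N B pl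
              ((\<Sum>l = 0..Lam - t. real (Kv l) * real (Lam choose (t + l))) / real (Lam choose t)))
       \<and> opt_load Lam (comb_users Lam Kv) comb_conn N (real t * real N / real Lam)
           = (\<Sum>l = 0..Lam - t. real (Kv l) * real (Lam choose (t + l))) / real (Lam choose t)"
  (is "?MAN \<and> opt_load _ _ _ _ ?M = ?R")
proof
  have Ncard: "card (comb_users Lam Kv) \<le> N" using assms(1) by (simp add: card_comb_users)
  show MAN: ?MAN
  proof (intro allI impI)
    fix B pl assume "B > 0 \<and> MAN_placement Lam N B t pl"
    then interpret MAN_delivery Lam N B t pl Kv using assms(2) by unfold_locales auto
    show "uncoded_placement Lam N B pl \<and> respects_cache_size Lam N B ?M pl
        \<and> achieves_load (comb_users Lam Kv) comb_conn N B pl ?R"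
      using uncoded respects_cache_size achieves_MAN_load[OF Ncard] by blast
  qed
  define loads where "loads = {R. \<exists>B pl. B > 0 \<and> uncoded_placement Lam N B pl \<and>
      respects_cache_size Lam N B ?M pl \<and> achieves_load (comb_users Lam Kv) comb_conn N B pl R}"
  obtain pl where "MAN_placement Lam N (Lam choose t) t pl"
    using exists_MAN_placement[OF assms(2)] .
  moreover have "Lam choose t > 0" using assms(2) by simp
  ultimately have "?R \<in> loads"
    using MAN[rule_format, of "Lam choose t" pl] unfolding loads_def by blast
  moreover have "?R \<le> R" if "R \<in> loads" for R
    using that comb_MAN_load_le_achieved_load[OF Ncard assms(2)]
    unfolding loads_def comb_MAN_load_eq[OF assms(2)] by blast
  ultimately show "opt_load Lam (comb_users Lam Kv) comb_conn N ?M = ?R"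
    unfolding opt_load_def loads_def[symmetric] by (rule cInf_eq_minimum)
qed

end
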